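(* Let $f\in\mathcal{F}_{\alpha,\beta}$, let $\epsilon_0>0$ and $\gamma\in\big[(1-\alpha/(d\beta))^{1/2},1\big)$, and let $\{\mathbf{x}^{(k)}\}_{k\ge0}$ be the sequence of CM outputs generated by the PCM algorithm $\Upsilon(\{\epsilon_0\gamma^k\}_{k\in\mathbb{N}},\upsilon,\tau)$ started from the initial point $\mathbf{x}^{(0)}$. Then for all $k\ge0$, $$\mathbb{E}[f(\mathbf{x}^{(k)})-f(\mathbf{x}^* )]\le F_0\gamma^k,\qquad F_0=\max\Big\{f(\mathbf{x}^{(0)})-f(\mathbf{x}^* ),\ \frac{\epsilon_0}{1-\gamma}\Big\}.$$
   Context: The objective is $f(\mathbf{x})=\mathbb{E}_\xi[F(\mathbf{x};\xi)]$ over a convex compact $\mathcal{X}\subset\mathbb{R}^d$, unknown to the learner; $\mathbf{x}^*=\arg\min_{\mathbf{x}\in\mathcal{X}}f(\mathbf{x})$. The class $\mathcal{F}_{\alpha,\beta}$ consists of functions $f=\psi+\phi$ where $\phi(\mathbf{x})=\sum_{i=1}^d\phi_i(\mathbf{x}_i)$ is coordinate-wise separable convex (possibly nonsmooth) and $\psi$ is $\alpha$-strongly convex ($\psi(\mathbf{y})\ge\psi(\mathbf{x})+\langle\nabla\psi(\mathbf{x}),\mathbf{y}-\mathbf{x}\rangle+\frac{\alpha}{2}\|\mathbf{y}-\mathbf{x}\|_2^2$) and $\beta$-smooth ($\|\nabla\psi(\mathbf{x})-\nabla\psi(\mathbf{y})\|\le\beta\|\mathbf{x}-\mathbf{y}\|_2$)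 on $\mathcal{X}$. The learner queries points and coordinates and observes unbiased noisy partial gradients. PCM algorithm $\Upsilon(\{\epsilon_k\},\upsilon,\tau)$: $\upsilon$ is a low-dimensional (one-coordinate) stochastic optimization routine and $\tau$ a termination rule giving, for each $\epsilon>0$, a stopping time $\tau(\epsilon)$ for $\upsilon$ such that the returned point is $\epsilon$-accurate in expectation for the one-dimensional problem being solved. In iteration $k=1,2,\dots$ a coordinate $i_k$ is chosen uniformly at random from $\{1,\dots,d\}$; $\upsilon$ is run on the one-dimensional restriction $x\mapsto f(x,\mathbf{x}^{(k-1)}_{-i_k})$ (all other coordinates fixed at those of $\mathbf{x}^{(k-1)}$), started at $\mathbf{x}^{(k-1)}_{i_k}$, and stopped at $\tau(\epsilon_k)$; $\mathbf{x}^{(k)}$ is $\mathbf{x}^{(k-1)}$ with coordinate $i_k$ replaced by the returned point. Thus, with $\mathbf{x}^*_{(i_k,\mathbf{x}^{(k-1)})}$ the minimizer of $f$ over points agreeing with $\mathbf{x}^{(k-1)}$ off coordinate $i_k$, one has $\mathbb{E}[f(\mathbf{x}^{(k)})\mid\mathbf{x}^{(k-1)},i_k]\le f(\mathbf{x}^*_{(i_k,\mathbf{x}^{(k-1)})})+\epsilon_k$.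
   Formalization: The feasible set $\mathcal{X}$ is a nonempty box, a product of compact intervals, rather than an arbitrary convex compact subset of $\mathbb{R}^d$, throughout the class and the coordinate subproblems. Apart from conventions, each condition added here is assumed in the paper as well or is needed for the statement above to hold. *)

theory Defs
  imports "HOL-Probability.Probability"
begin

definition in_F :: "real \<Rightarrow> real \<Rightarrow> (real^'d) set \<Rightarrow> (real^'d \<Rightarrow> real) \<Rightarrow> bool" where
  "in_F \<alpha> \<beta> S f \<longleftrightarrow>
     (\<exists>(\<psi> :: real^'d \<Rightarrow> real) (gpsi :: real^'d \<Rightarrow> real^'d) (\<phi> :: 'd \<Rightarrow> real \<Rightarrow> real).
        (\<forall>x\<in>S. (\<psi> has_derivative (\<lambda>h. gpsi x \<bullet> h)) (at x within S)) \<and>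
        (\<forall>x\<in>S. \<forall>y\<in>S. \<psi> y \<ge> \<psi> x + gpsi x \<bullet> (y - x) + \<alpha> / 2 * (norm (y - x))\<^sup>2) \<and>
        (\<forall>x\<in>S. \<forall>y\<in>S. norm (gpsi x - gpsi y) \<le> \<beta> * norm (x - y)) \<and>
        (\<forall>i. convex_on ((\<lambda>x. x $ i) ` S) (\<phi> i)) \<and>
        (\<forall>x\<in>S. f x = \<psi> x + (\<Sum>i\<in>UNIV. \<phi> i (x $ i))))"

text \<open>Optimal value of the one-coordinate subproblem: f(x*_{(i,x)}), the minimum of f over
 the points of S agreeing with x off coordinate i (taken as an infimum).\<close>
definition coord_min :: "(real^'d \<Rightarrow> real) \<Rightarrow> (real^'d) set \<Rightarrow> real^'d \<Rightarrow> 'd \<Rightarrow> real" where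
  "coord_min f S x i = Inf (f ` {y \<in> S. \<forall>j. j \<noteq> i \<longrightarrow> y $ j = x $ j})"

end

theory Submission
  imports Defs
begin

(* Moving coordinate i of a point x of the box the fraction \<theta> = \<alpha>/\<beta> toward xstar and
   averaging over i decreases f - f xstar by the factor 1 - \<alpha>/(d \<beta>): \<beta>-smoothness bounds
   the \<psi>-part of each such step, separable convexity the \<phi>-part, and \<alpha>-strong convexity of
   \<psi> turns the remaining linear term into f xstar - f x.  A PCM step lands within \<epsilon>\<^sub>k of the
   best point of its coordinate line, which is at least as good as that comparison point, and
   the coordinate is uniform and independent of the previous iterate; hence
   e\<^sub>k \<le> \<gamma>\<^sup>2 e\<^sub>k\<^sub>-\<^sub>1 + \<epsilon>\<^sub>0 \<gamma>\<^sup>k for the expected gaps e\<^sub>k, which unrolls to the geometric bound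
   because \<epsilon>\<^sub>0 \<le> (1 - \<gamma>) F\<^sub>0. *)

lemma smooth_upper_bound:
  fixes \<psi> :: "'a::real_inner \<Rightarrow> real" and g :: "'a \<Rightarrow> 'a"
  assumes S: "convex S"
    and der: "\<forall>x\<in>S. (\<psi> has_derivative (\<lambda>h. g x \<bullet> h)) (at x within S)"
    and lip: "\<forall>x\<in>S. \<forall>y\<in>S. norm (g x - g y) \<le> \<beta> * norm (x - y)"
    and xy: "x \<in> S" "y \<in> S"
  shows "\<psi> y \<le> \<psi> x + g x \<bullet> (y - x) + \<beta> / 2 * (norm (y - x))\<^sup>2"
proof -
  define v where "v = y - x"
  define p where "p = (\<lambda>s::real. x + s *\<^sub>R v)"
  have pS: "p s \<in> S" if "s \<in> {0..1}" for s
  proof -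
    have "p s = (1 - s) *\<^sub>R x + s *\<^sub>R y" by (simp add: p_def v_def algebra_simps)
    then show ?thesis using S xy that by (simp add: convex_def)
  qed
  define k where "k = (\<lambda>s. \<psi> (p s) - s * (g x \<bullet> v) - \<beta> / 2 * s\<^sup>2 * (norm v)\<^sup>2)"
  define k' where "k' = (\<lambda>s t::real. t * (g (p s) \<bullet> v) - t * (g x \<bullet> v) - \<beta> * s * t * (norm v)\<^sup>2)"
  have dk: "(k has_derivative k' s) (at s within {0..1})" if s: "s \<in> {0..1}" for s
  proof -
    have dp: "(p has_derivative (\<lambda>t. t *\<^sub>R v)) (at s within {0..1})"
      unfolding p_def by (auto intro!: derivative_eq_intros)
    have "(\<psi> has_derivative (\<lambda>h. g (p s) \<bullet> h)) (at (p s) within p ` {0..1})"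
      using der pS s by (blast intro: has_derivative_subset)
    from diff_chain_within[OF dp this]
    have d\<psi>: "((\<lambda>s. \<psi> (p s)) has_derivative (\<lambda>t. g (p s) \<bullet> (t *\<^sub>R v))) (at s within {0..1})"
      by (simp add: o_def)
    show ?thesis unfolding k_def k'_def
      by (rule derivative_eq_intros d\<psi> | simp)+ (auto simp: algebra_simps power2_eq_square)
  qed
  obtain z where z: "z \<in> {0..1}" "k 1 - k 0 = k' z 1"
    using mvt_very_simple[of 0 1 k k'] dk by auto
  have "k' z 1 = (g (p z) - g x) \<bullet> v - \<beta> * z * (norm v)\<^sup>2"
    by (simp add: k'_def inner_diff_left)
  also have "(g (p z) - g x) \<bullet> v \<le> norm (g (p z) - g x) * norm v"
    by (rule norm_cauchy_schwarz)
  also have "norm (g (p z) - g x) \<le> \<beta> * norm (p z - x)"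
    using lip pS z xy by auto
  also have "norm (p z - x) = z * norm v" using z by (simp add: p_def)
  finally have "k' z 1 \<le> 0" by (simp add: mult_right_mono power2_eq_square mult.assoc)
  then have "k 1 \<le> k 0" using z by simp
  then show ?thesis by (simp add: k_def p_def v_def)
qed

lemma strongly_convex_smooth_eq:
  fixes \<psi> :: "'a::real_inner \<Rightarrow> real" and g :: "'a \<Rightarrow> 'a"
  assumes sc: "\<forall>x\<in>S. \<forall>y\<in>S. \<psi> y \<ge> \<psi> x + g x \<bullet> (y - x) + \<alpha> / 2 * (norm (y - x))\<^sup>2"
    and lip: "\<forall>x\<in>S. \<forall>y\<in>S. norm (g x - g y) \<le> \<beta> * norm (x - y)"
    and "\<beta> < \<alpha>" and xy: "x \<in> S" "y \<in> S"
  shows "x = y"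
proof -
  have "\<alpha> * (norm (x - y))\<^sup>2 \<le> (g x - g y) \<bullet> (x - y)"
    using sc[rule_format, OF xy] sc[rule_format, OF xy(2,1)]
    by (simp add: inner_diff_left inner_diff_right norm_minus_commute)
  also have "\<dots> \<le> norm (g x - g y) * norm (x - y)" by (rule norm_cauchy_schwarz)
  also have "\<dots> \<le> \<beta> * norm (x - y) * norm (x - y)"
    using lip xy by (intro mult_right_mono) auto
  finally have "(\<alpha> - \<beta>) * (norm (x - y))\<^sup>2 \<le> 0" by (simp add: power2_eq_square algebra_simps)
  with \<open>\<beta> < \<alpha>\<close> show ?thesis by (simp add: mult_le_0_iff)
qed

text \<open>With \<open>\<theta> = \<alpha> / \<beta>\<close> and \<open>z\<close> the minimizer, this is the comparison point that certifies
  the decrease of a PCM step.\<close>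
definition coord_toward :: "real \<Rightarrow> real^'d \<Rightarrow> real^'d \<Rightarrow> 'd \<Rightarrow> real^'d" where
  "coord_toward \<theta> z x i = x + (\<theta> * (z $ i - x $ i)) *\<^sub>R axis i 1"

lemma coord_toward_nth:
  "coord_toward \<theta> z x i $ j = (if j = i then (1 - \<theta>) * x $ i + \<theta> * z $ i else x $ j)"
  by (simp add: coord_toward_def axis_def algebra_simps)

lemma coord_toward_same: "coord_toward \<theta> x x i = x"
  by (simp add: coord_toward_def)

lemma coord_toward_in_cbox:
  assumes "x \<in> cbox a b" "z \<in> cbox a b" "0 \<le> \<theta>" "\<theta> \<le> 1"
  shows "coord_toward \<theta> z x i \<in> cbox a b"
proof -
  have "(1 - \<theta>) * x $ i + \<theta> * z $ i \<in> {a $ i..b $ i}"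
    using convexD_alt[OF convex_real_interval(5), of "x $ i" "a $ i" "b $ i" "z $ i" \<theta>] assms
    by (auto simp: mem_box_cart algebra_simps)
  then show ?thesis using assms(1) by (auto simp: mem_box_cart coord_toward_nth)
qed

lemma borel_measurable_coord_toward:
  "(\<lambda>x. coord_toward \<theta> z x i) \<in> borel_measurable borel"
  unfolding coord_toward_def by measurable

lemma smooth_strongly_convex_coordinate_steps:
  fixes \<psi> :: "real^'d \<Rightarrow> real" and g :: "real^'d \<Rightarrow> real^'d"
  assumes der: "\<forall>x\<in>cbox a b. (\<psi> has_derivative (\<lambda>h. g x \<bullet> h)) (at x within cbox a b)"
    and sc: "\<forall>x\<in>cbox a b. \<forall>y\<in>cbox a b. \<psi> y \<ge> \<psi> x + g x \<bullet> (y - x) + \<alpha> / 2 * (norm (y - x))\<^sup>2"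
    and lip: "\<forall>x\<in>cbox a b. \<forall>y\<in>cbox a b. norm (g x - g y) \<le> \<beta> * norm (x - y)"
    and x: "x \<in> cbox a b" and z: "z \<in> cbox a b"
    and \<theta>: "0 \<le> \<theta>" "\<theta> \<le> 1" "\<beta> * \<theta> \<le> \<alpha>"
  shows "(\<Sum>i\<in>UNIV. \<psi> (coord_toward \<theta> z x i)) \<le> real CARD('d) * \<psi> x + \<theta> * (\<psi> z - \<psi> x)"
proof -
  define r where "r = z - x"
  have step: "\<psi> (coord_toward \<theta> z x i) \<le> \<psi> x + \<theta> * (r $ i * g x $ i) + \<beta> / 2 * \<theta>\<^sup>2 * (r $ i)\<^sup>2" for i
  proof -
    have d: "coord_toward \<theta> z x i - x = (\<theta> * r $ i) *\<^sub>R axis i 1"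
      by (simp add: coord_toward_def r_def)
    have "\<psi> (coord_toward \<theta> z x i) \<le> \<psi> x + g x \<bullet> (coord_toward \<theta> z x i - x)
        + \<beta> / 2 * (norm (coord_toward \<theta> z x i - x))\<^sup>2"
      by (rule smooth_upper_bound[OF convex_box(1) der lip x coord_toward_in_cbox[OF x z \<theta>(1,2)]])
    also have "\<dots> = \<psi> x + \<theta> * (r $ i * g x $ i) + \<beta> / 2 * \<theta>\<^sup>2 * (r $ i)\<^sup>2"
      unfolding d by (simp add: inner_axis power_mult_distrib algebra_simps)
    finally show ?thesis .
  qed
  have norm_sq: "(norm r)\<^sup>2 = (\<Sum>i\<in>UNIV. (r $ i)\<^sup>2)"
    by (simp add: norm_vec_def L2_set_def sum_nonneg)
  have "(\<Sum>i\<in>UNIV. \<psi> (coord_toward \<theta> z x i))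
      \<le> (\<Sum>i\<in>UNIV. \<psi> x + \<theta> * (r $ i * g x $ i) + \<beta> / 2 * \<theta>\<^sup>2 * (r $ i)\<^sup>2)"
    by (intro sum_mono step)
  also have "\<dots> = real CARD('d) * \<psi> x + \<theta> * (g x \<bullet> r) + \<beta> / 2 * \<theta>\<^sup>2 * (norm r)\<^sup>2"
    by (simp add: sum.distrib sum_distrib_left inner_vec_def norm_sq mult.commute)
  also have "\<dots> \<le> real CARD('d) * \<psi> x + \<theta> * (\<psi> z - \<psi> x)"
  proof -
    have "g x \<bullet> r \<le> \<psi> z - \<psi> x - \<alpha> / 2 * (norm r)\<^sup>2" using sc x z unfolding r_def by fastforce
    then have "\<theta> * (g x \<bullet> r) \<le> \<theta> * (\<psi> z - \<psi> x) - \<theta> * (\<alpha> / 2 * (norm r)\<^sup>2)"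
      using mult_left_mono[OF _ \<theta>(1)] by (fastforce simp: right_diff_distrib)
    moreover have "\<beta> * \<theta> * \<theta> * (norm r)\<^sup>2 \<le> \<alpha> * \<theta> * (norm r)\<^sup>2"
      using \<theta> by (intro mult_right_mono) auto
    ultimately show ?thesis by (simp add: power2_eq_square algebra_simps)
  qed
  finally show ?thesis .
qed

lemma separable_convex_coordinate_steps:
  fixes \<phi> :: "'d::finite \<Rightarrow> real \<Rightarrow> real"
  assumes conv: "\<forall>i. convex_on {a $ i..b $ i} (\<phi> i)"
    and x: "x \<in> cbox a b" and z: "z \<in> cbox a b" and \<theta>: "0 \<le> \<theta>" "\<theta> \<le> 1"
  defines "\<Phi> \<equiv> \<lambda>y. \<Sum>j\<in>UNIV. \<phi> j (y $ j)"
  shows "(\<Sum>i\<in>UNIV. \<Phi> (coord_toward \<theta> z x i)) \<le> real CARD('d) * \<Phi> x + \<theta> * (\<Phi> z - \<Phi> x)"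
proof -
  have step: "\<Phi> (coord_toward \<theta> z x i) \<le> \<Phi> x + \<theta> * (\<phi> i (z $ i) - \<phi> i (x $ i))" for i
  proof -
    have "\<Phi> (coord_toward \<theta> z x i)
        = (\<Sum>j\<in>UNIV. \<phi> j (x $ j) + (if j = i then \<phi> i ((1 - \<theta>) * x $ i + \<theta> * z $ i) - \<phi> i (x $ i) else 0))"
      unfolding \<Phi>_def by (intro sum.cong) (auto simp: coord_toward_nth)
    also have "\<dots> = \<Phi> x + (\<phi> i ((1 - \<theta>) * x $ i + \<theta> * z $ i) - \<phi> i (x $ i))"
      by (simp add: sum.distrib \<Phi>_def)
    also have "\<phi> i ((1 - \<theta>) * x $ i + \<theta> * z $ i) \<le> (1 - \<theta>) * \<phi> i (x $ i) + \<theta> * \<phi> i (z $ i)"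
      using convex_onD[OF conv[rule_format, of i]] x z \<theta> by (simp add: mem_box_cart)
    finally show ?thesis by (simp add: algebra_simps)
  qed
  have "(\<Sum>i\<in>UNIV. \<Phi> (coord_toward \<theta> z x i)) \<le> (\<Sum>i\<in>UNIV. \<Phi> x + \<theta> * (\<phi> i (z $ i) - \<phi> i (x $ i)))"
    by (intro sum_mono step)
  also have "\<dots> = real CARD('d) * \<Phi> x + \<theta> * (\<Phi> z - \<Phi> x)"
    by (simp add: \<Phi>_def sum.distrib sum_subtractf flip: sum_distrib_left)
  finally show ?thesis .
qed

lemma cart_nth_image_cbox:
  fixes a b :: "real^'d"
  assumes "cbox a b \<noteq> {}"
  shows "(\<lambda>x. x $ i) ` cbox a b = {a $ i..b $ i}"
proof
  show "(\<lambda>x. x $ i) ` cbox a b \<subseteq> {a $ i..b $ i}" by (auto simp: mem_box_cart)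
  obtain w where w: "w \<in> cbox a b" using assms by blast
  show "{a $ i..b $ i} \<subseteq> (\<lambda>x. x $ i) ` cbox a b"
  proof
    fix s assume "s \<in> {a $ i..b $ i}"
    then have "(\<chi> j. if j = i then s else w $ j) \<in> cbox a b" using w by (auto simp: mem_box_cart)
    then show "s \<in> (\<lambda>x. x $ i) ` cbox a b" by (rule rev_image_eqI) simp
  qed
qed

lemma in_F_cboxE:
  assumes "in_F \<alpha> \<beta> (cbox a b) f" "cbox a b \<noteq> {}"
  obtains \<psi> :: "real^'d \<Rightarrow> real" and g :: "real^'d \<Rightarrow> real^'d" and \<phi> :: "'d \<Rightarrow> real \<Rightarrow> real" where
    "\<forall>x\<in>cbox a b. (\<psi> has_derivative (\<lambda>h. g x \<bullet> h)) (at x within cbox a b)"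
    "\<forall>x\<in>cbox a b. \<forall>y\<in>cbox a b. \<psi> y \<ge> \<psi> x + g x \<bullet> (y - x) + \<alpha> / 2 * (norm (y - x))\<^sup>2"
    "\<forall>x\<in>cbox a b. \<forall>y\<in>cbox a b. norm (g x - g y) \<le> \<beta> * norm (x - y)"
    "\<forall>i. convex_on {a $ i..b $ i} (\<phi> i)"
    "\<forall>x\<in>cbox a b. f x = \<psi> x + (\<Sum>i\<in>UNIV. \<phi> i (x $ i))"
  using assms unfolding in_F_def cart_nth_image_cbox[OF assms(2)] by blast

lemma in_F_eq_of_smoothness_lt:
  assumes "in_F \<alpha> \<beta> S f" "\<beta> < \<alpha>" "x \<in> S" "y \<in> S"
  shows "x = y"
proof -
  obtain \<psi> g where
    "\<forall>x\<in>S. \<forall>y\<in>S. \<psi> y \<ge> \<psi> x + g x \<bullet> (y - x) + \<alpha> / 2 * (norm (y - x))\<^sup>2"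
    "\<forall>x\<in>S. \<forall>y\<in>S. norm (g x - g y) \<le> \<beta> * norm (x - y)"
    using assms(1) unfolding in_F_def by blast
  from strongly_convex_smooth_eq[OF this assms(2-4)] show ?thesis .
qed

lemma in_F_coordinate_steps_sum_le:
  fixes f :: "real^'d \<Rightarrow> real"
  assumes fF: "in_F \<alpha> \<beta> (cbox a b) f" and box: "cbox a b \<noteq> {}"
    and x: "x \<in> cbox a b" and z: "z \<in> cbox a b"
    and \<theta>: "0 \<le> \<theta>" "\<theta> \<le> 1" "\<beta> * \<theta> \<le> \<alpha>"
  shows "(\<Sum>i\<in>UNIV. f (coord_toward \<theta> z x i)) \<le> real CARD('d) * f x - \<theta> * (f x - f z)"
proof -
  obtain \<psi> g \<phi> where der: "\<forall>x\<in>cbox a b. (\<psi> has_derivative (\<lambda>h. g x \<bullet> h)) (at x within cbox a b)"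
    and sc: "\<forall>x\<in>cbox a b. \<forall>y\<in>cbox a b. \<psi> y \<ge> \<psi> x + g x \<bullet> (y - x) + \<alpha> / 2 * (norm (y - x))\<^sup>2"
    and lip: "\<forall>x\<in>cbox a b. \<forall>y\<in>cbox a b. norm (g x - g y) \<le> \<beta> * norm (x - y)"
    and conv: "\<forall>i. convex_on {a $ i..b $ i} (\<phi> i)"
    and feq: "\<forall>x\<in>cbox a b. f x = \<psi> x + (\<Sum>i\<in>UNIV. \<phi> i (x $ i))"
    by (rule in_F_cboxE[OF fF box]) (rule that)
  have "(\<Sum>i\<in>UNIV. f (coord_toward \<theta> z x i))
      = (\<Sum>i\<in>UNIV. \<psi> (coord_toward \<theta> z x i)) + (\<Sum>i\<in>UNIV. \<Sum>j\<in>UNIV. \<phi> j (coord_toward \<theta> z x i $ j))"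
    using feq coord_toward_in_cbox[OF x z \<theta>(1,2)] by (simp add: sum.distrib)
  also have "\<dots> \<le> real CARD('d) * f x - \<theta> * (f x - f z)"
    using smooth_strongly_convex_coordinate_steps[OF der sc lip x z \<theta>]
      separable_convex_coordinate_steps[OF conv x z \<theta>(1,2)] feq x z
    by (simp add: algebra_simps)
  finally show ?thesis .
qed

lemma in_F_coordinate_steps_average_le:
  fixes f :: "real^'d \<Rightarrow> real"
  assumes fF: "in_F \<alpha> \<beta> (cbox a b) f" and box: "cbox a b \<noteq> {}" and "0 < \<alpha>" "0 < \<beta>"
    and x: "x \<in> cbox a b" and z: "z \<in> cbox a b"
  shows "(\<Sum>i\<in>UNIV. f (coord_toward (\<alpha> / \<beta>) z x i)) / real CARD('d)
    \<le> f z + (1 - \<alpha> / (real CARD('d) * \<beta>)) * (f x - f z)"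
proof (cases "\<alpha> \<le> \<beta>")
  case True
  with \<open>0 < \<alpha>\<close> \<open>0 < \<beta>\<close> have "0 \<le> \<alpha> / \<beta>" "\<alpha> / \<beta> \<le> 1" "\<beta> * (\<alpha> / \<beta>) \<le> \<alpha>" by auto
  from in_F_coordinate_steps_sum_le[OF fF box x z this]
  have "(\<Sum>i\<in>UNIV. f (coord_toward (\<alpha> / \<beta>) z x i)) / real CARD('d)
      \<le> (real CARD('d) * f x - \<alpha> / \<beta> * (f x - f z)) / real CARD('d)"
    by (rule divide_right_mono) simp
  also have "\<dots> = f z + (1 - \<alpha> / (real CARD('d) * \<beta>)) * (f x - f z)"
    using \<open>0 < \<beta>\<close> by (simp add: field_simps)
  finally show ?thesis .
next
  case False
  then have "x = z" using in_F_eq_of_smoothness_lt[OF fF _ x z] by simp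
  then show ?thesis by (simp add: coord_toward_same)
qed

lemma in_F_coord_toward_in_cbox:
  fixes f :: "real^'d \<Rightarrow> real"
  assumes fF: "in_F \<alpha> \<beta> (cbox a b) f" and "0 < \<alpha>" "0 < \<beta>"
    and x: "x \<in> cbox a b" and z: "z \<in> cbox a b"
  shows "coord_toward (\<alpha> / \<beta>) z x i \<in> cbox a b"
proof (cases "\<alpha> \<le> \<beta>")
  case True
  with \<open>0 < \<alpha>\<close> \<open>0 < \<beta>\<close> show ?thesis by (intro coord_toward_in_cbox[OF x z]) auto
next
  case False
  then have "x = z" using in_F_eq_of_smoothness_lt[OF fF _ x z] by simp
  with x show ?thesis by (simp add: coord_toward_same)
qed

lemma convex_on_interval_borel_measurable:
  fixes \<phi> :: "real \<Rightarrow> real"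
  assumes "convex_on {l..u} \<phi>"
  shows "\<phi> \<in> borel_measurable (restrict_space borel {l..u})"
proof -
  have "continuous_on {l<..<u} \<phi>"
    by (rule convex_on_continuous) (auto intro: convex_on_subset[OF assms])
  then have "\<phi> \<in> borel_measurable (restrict_space borel {l<..<u})"
    by (rule borel_measurable_continuous_on_restrict)
  then have "(\<lambda>t. indicator {l<..<u} t *\<^sub>R \<phi> t) \<in> borel_measurable borel"
    by (simp add: borel_measurable_restrict_space_iff)
  then have "(\<lambda>t. indicator {l..u} t *\<^sub>R \<phi> t) \<in> borel_measurable borel"
    by (rule measurable_discrete_difference[where X="{l, u}"]) (auto simp: indicator_def)
  then show ?thesis by (simp add: borel_measurable_restrict_space_iff)
qed

lemma in_F_borel_measurable_cbox:
  fixes f :: "real^'d \<Rightarrow> real"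
  assumes fF: "in_F \<alpha> \<beta> (cbox a b) f" and box: "cbox a b \<noteq> {}"
  shows "f \<in> borel_measurable (restrict_space borel (cbox a b))"
proof -
  obtain \<psi> g \<phi> where der: "\<forall>x\<in>cbox a b. (\<psi> has_derivative (\<lambda>h. g x \<bullet> h)) (at x within cbox a b)"
    and conv: "\<forall>i. convex_on {a $ i..b $ i} (\<phi> i)"
    and feq: "\<forall>x\<in>cbox a b. f x = \<psi> x + (\<Sum>i\<in>UNIV. \<phi> i (x $ i))"
    by (rule in_F_cboxE[OF fF box]) (rule that)
  have "continuous_on (cbox a b) \<psi>"
    using der by (intro has_derivative_continuous_on) auto
  then have \<psi>: "\<psi> \<in> borel_measurable (restrict_space borel (cbox a b))"
    by (rule borel_measurable_continuous_on_restrict)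
  have \<phi>: "(\<lambda>x. \<phi> i (x $ i)) \<in> borel_measurable (restrict_space borel (cbox a b))" for i
    by (rule measurable_compose[OF measurable_restrict_space3[OF borel_measurable_nth]
          convex_on_interval_borel_measurable[OF conv[rule_format]]])
      (auto simp: mem_box_cart)
  have "(\<lambda>x. \<psi> x + (\<Sum>i\<in>UNIV. \<phi> i (x $ i))) \<in> borel_measurable (restrict_space borel (cbox a b))"
    by (intro borel_measurable_add borel_measurable_sum \<psi> \<phi>)
  then show ?thesis by (subst measurable_cong) (simp_all add: feq)
qed

lemma in_F_bdd_above_cbox:
  fixes f :: "real^'d \<Rightarrow> real"
  assumes fF: "in_F \<alpha> \<beta> (cbox a b) f" and box: "cbox a b \<noteq> {}"
  shows "bdd_above (f ` cbox a b)"
proof -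
  obtain \<psi> g \<phi> where der: "\<forall>x\<in>cbox a b. (\<psi> has_derivative (\<lambda>h. g x \<bullet> h)) (at x within cbox a b)"
    and conv: "\<forall>i. convex_on {a $ i..b $ i} (\<phi> i)"
    and feq: "\<forall>x\<in>cbox a b. f x = \<psi> x + (\<Sum>i\<in>UNIV. \<phi> i (x $ i))"
    by (rule in_F_cboxE[OF fF box]) (rule that)
  have "continuous_on (cbox a b) \<psi>"
    using der by (intro has_derivative_continuous_on) auto
  then obtain x\<^sub>m where x\<^sub>m: "\<And>x. x \<in> cbox a b \<Longrightarrow> \<psi> x \<le> \<psi> x\<^sub>m"
    using continuous_attains_sup[OF compact_cbox box] by blast
  show ?thesis
  proof (rule bdd_aboveI2)
    fix x assume x: "x \<in> cbox a b"
    have "(\<Sum>i\<in>UNIV. \<phi> i (x $ i)) \<le> (\<Sum>i\<in>UNIV. max (\<phi> i (a $ i)) (\<phi> i (b $ i)))"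
      using x by (intro sum_mono convex_on_le_max[OF conv[rule_format]]) (simp add: mem_box_cart)
    with x\<^sub>m[OF x] feq x show "f x \<le> \<psi> x\<^sub>m + (\<Sum>i\<in>UNIV. max (\<phi> i (a $ i)) (\<phi> i (b $ i)))" by simp
  qed
qed

text \<open>The independence hypothesis says that, restricted to \<open>E\<close>, the law of \<open>Z\<close> is \<open>p\<close> times
  its law under \<open>M\<close>.\<close>
lemma integral_indicator_mult_indep:
  fixes Z :: "'w \<Rightarrow> 'a" and h :: "'a \<Rightarrow> real"
  assumes "finite_measure M" and Z: "Z \<in> measurable M N" and E: "E \<in> sets M"
    and h: "h \<in> borel_measurable N" and p: "0 \<le> p"
    and indep: "\<forall>A\<in>sets N. measure M {\<omega>\<in>space M. \<omega> \<in> E \<and> Z \<omega> \<in> A} = p * measure M {\<omega>\<in>space M. Z \<omega> \<in> A}"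
  shows "(\<integral>\<omega>. indicator E \<omega> * h (Z \<omega>) \<partial>M) = p * (\<integral>\<omega>. h (Z \<omega>) \<partial>M)"
proof -
  interpret finite_measure M by fact
  define M\<^sub>E where "M\<^sub>E = density M (\<lambda>\<omega>. ennreal (indicator E \<omega>))"
  have Z\<^sub>E: "Z \<in> measurable M\<^sub>E N" unfolding M\<^sub>E_def using Z by simp
  have law: "distr M\<^sub>E N Z = density (distr M N Z) (\<lambda>_. ennreal p)"
  proof (rule measure_eqI)
    fix A assume "A \<in> sets (distr M\<^sub>E N Z)"
    then have A: "A \<in> sets N" by simp
    then have ZA: "Z -` A \<inter> space M \<in> sets M" using Z by (simp add: measurable_sets)
    have "emeasure (distr M\<^sub>E N Z) A = emeasure M\<^sub>E (Z -` A \<inter> space M)"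
      using A Z\<^sub>E by (simp add: emeasure_distr M\<^sub>E_def)
    also have "\<dots> = (\<integral>\<^sup>+ \<omega>. indicator E \<omega> * indicator (Z -` A \<inter> space M) \<omega> \<partial>M)"
      unfolding M\<^sub>E_def using ZA E by (simp add: emeasure_density nn_integral_indicator ennreal_indicator)
    also have "\<dots> = (\<integral>\<^sup>+ \<omega>. indicator (E \<inter> (Z -` A \<inter> space M)) \<omega> \<partial>M)"
      by (intro nn_integral_cong) (auto simp: indicator_def)
    also have "\<dots> = emeasure M (E \<inter> (Z -` A \<inter> space M))"
      using ZA E by (intro nn_integral_indicator) auto
    also have "E \<inter> (Z -` A \<inter> space M) = {\<omega>\<in>space M. \<omega> \<in> E \<and> Z \<omega> \<in> A}" by auto
    also have "emeasure M {\<omega>\<in>space M. \<omega> \<in> E \<and> Z \<omega> \<in> A} = ennreal p * emeasure (distr M N Z) A"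
      using indep A Z p
      by (simp add: emeasure_eq_measure emeasure_distr ennreal_mult vimage_def Int_def conj_commute)
    also have "\<dots> = emeasure (density (distr M N Z) (\<lambda>_. ennreal p)) A"
      using A by (simp add: emeasure_density nn_integral_cmult_indicator)
    finally show "emeasure (distr M\<^sub>E N Z) A = emeasure (density (distr M N Z) (\<lambda>_. ennreal p)) A" .
  qed simp
  have "(\<integral>\<omega>. h (Z \<omega>) \<partial>M\<^sub>E) = (\<integral>\<omega>. indicator E \<omega> *\<^sub>R h (Z \<omega>) \<partial>M)"
    unfolding M\<^sub>E_def by (rule integral_density) (use E h Z in auto)
  then have "(\<integral>\<omega>. indicator E \<omega> * h (Z \<omega>) \<partial>M) = (\<integral>\<omega>. h (Z \<omega>) \<partial>M\<^sub>E)" by simp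
  also have "\<dots> = integral\<^sup>L (distr M\<^sub>E N Z) h"
    using Z\<^sub>E h by (simp add: integral_distr)
  also have "\<dots> = integral\<^sup>L (distr M N Z) (\<lambda>x. p * h x)"
    unfolding law using h p by (subst integral_density) auto
  also have "\<dots> = p * (\<integral>\<omega>. h (Z \<omega>) \<partial>M)"
    using Z h by (simp add: integral_distr)
  finally show ?thesis .
qed

lemma integral_uniform_index:
  fixes Z :: "'w \<Rightarrow> 'a" and J :: "'w \<Rightarrow> 'i::finite" and h :: "'a \<Rightarrow> 'i \<Rightarrow> real"
  assumes "prob_space M" and Z: "Z \<in> measurable M N" and J: "J \<in> measurable M (count_space UNIV)"
    and unif: "\<forall>i. measure M {\<omega>\<in>space M. J \<omega> = i} = 1 / real CARD('i)"
    and indep: "\<forall>i. \<forall>A\<in>sets N. measure M {\<omega>\<in>space M. J \<omega> = i \<and> Z \<omega> \<in> A}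
      = measure M {\<omega>\<in>space M. J \<omega> = i} * measure M {\<omega>\<in>space M. Z \<omega> \<in> A}"
    and h: "\<forall>i. (\<lambda>x. h x i) \<in> borel_measurable N"
    and int: "\<forall>i. integrable M (\<lambda>\<omega>. h (Z \<omega>) i)"
  shows "integrable M (\<lambda>\<omega>. h (Z \<omega>) (J \<omega>))"
    and "(\<integral>\<omega>. h (Z \<omega>) (J \<omega>) \<partial>M) = (\<Sum>i\<in>UNIV. \<integral>\<omega>. h (Z \<omega>) i \<partial>M) / real CARD('i)"
proof -
  interpret prob_space M by fact
  define E where "E i = {\<omega>\<in>space M. J \<omega> = i}" for i
  have E: "E i \<in> sets M" for i
    unfolding E_def using J by measurable
  have split: "h (Z \<omega>) (J \<omega>) = (\<Sum>i\<in>UNIV. indicator (E i) \<omega> * h (Z \<omega>) i)" if "\<omega> \<in> space M" for \<omega>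
  proof -
    have "(\<Sum>i\<in>UNIV. indicator (E i) \<omega> * h (Z \<omega>) i) = (\<Sum>i\<in>UNIV. if J \<omega> = i then h (Z \<omega>) i else 0)"
      using that by (intro sum.cong) (auto simp: E_def)
    then show ?thesis by simp
  qed
  have int_E: "integrable M (\<lambda>\<omega>. indicator (E i) \<omega> * h (Z \<omega>) i)" for i
    using integrable_mult_indicator[OF E int[rule_format]] by simp
  have "integrable M (\<lambda>\<omega>. \<Sum>i\<in>UNIV. indicator (E i) \<omega> * h (Z \<omega>) i)"
    by (intro Bochner_Integration.integrable_sum int_E)
  moreover have "integrable M (\<lambda>\<omega>. h (Z \<omega>) (J \<omega>))
      \<longleftrightarrow> integrable M (\<lambda>\<omega>. \<Sum>i\<in>UNIV. indicator (E i) \<omega> * h (Z \<omega>) i)"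
    using split by (intro Bochner_Integration.integrable_cong) auto
  ultimately show "integrable M (\<lambda>\<omega>. h (Z \<omega>) (J \<omega>))" by simp
  have "(\<integral>\<omega>. h (Z \<omega>) (J \<omega>) \<partial>M) = (\<integral>\<omega>. (\<Sum>i\<in>UNIV. indicator (E i) \<omega> * h (Z \<omega>) i) \<partial>M)"
    using split by (intro Bochner_Integration.integral_cong) auto
  also have "\<dots> = (\<Sum>i\<in>UNIV. \<integral>\<omega>. indicator (E i) \<omega> * h (Z \<omega>) i \<partial>M)"
    by (intro Bochner_Integration.integral_sum int_E)
  also have "\<dots> = (\<Sum>i\<in>UNIV. 1 / real CARD('i) * (\<integral>\<omega>. h (Z \<omega>) i \<partial>M))"
    using indep unif
    by (intro sum.cong refl integral_indicator_mult_indep[OF finite_measure_axioms Z E h[rule_format]])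
      (auto simp: E_def)
  finally show "(\<integral>\<omega>. h (Z \<omega>) (J \<omega>) \<partial>M) = (\<Sum>i\<in>UNIV. \<integral>\<omega>. h (Z \<omega>) i \<partial>M) / real CARD('i)"
    by (simp add: sum_distrib_left sum_divide_distrib)
qed

lemma finite_measure_subalgebra_vimage_algebra:
  assumes "finite_measure M" "g \<in> measurable M N"
  shows "finite_measure_subalgebra M (vimage_algebra (space M) g N)"
  using assms by (auto simp: finite_measure_subalgebra_def finite_measure_subalgebra_axioms_def
      subalgebra_def measurable_iff_sets)

lemma (in sigma_finite_subalgebra) integral_le_of_real_cond_exp_le:
  assumes Y: "integrable M Y" and "integrable M G" and "AE x in M. real_cond_exp M F Y x \<le> G x"
  shows "(\<integral>x. Y x \<partial>M) \<le> (\<integral>x. G x \<partial>M)"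
  using integral_mono_AE[OF real_cond_exp_int(1)[OF Y] assms(2,3)] real_cond_exp_int(2)[OF Y]
  by simp

lemma coord_min_le:
  assumes "bdd_below (f ` S)" "y \<in> S" "\<forall>j. j \<noteq> i \<longrightarrow> y $ j = x $ j"
  shows "coord_min f S x i \<le> f y"
  unfolding coord_min_def
  by (rule cInf_lower) (use assms in \<open>auto intro: bdd_below_mono\<close>)

locale random_coordinate_step = prob_space M
  for M :: "'w measure" and f :: "real^'d \<Rightarrow> real" and a b xstar :: "real^'d" and \<alpha> \<beta> :: real
    and Z :: "'w \<Rightarrow> real^'d" and J :: "'w \<Rightarrow> 'd" +
  assumes fF: "in_F \<alpha> \<beta> (cbox a b) f" and pos: "0 < \<alpha>" "0 < \<beta>"
    and xstar: "xstar \<in> cbox a b" and minimal: "\<forall>y\<in>cbox a b. f xstar \<le> f y"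
    and Z_meas: "Z \<in> borel_measurable M" and Z_in: "\<forall>\<omega>\<in>space M. Z \<omega> \<in> cbox a b"
    and Z_int: "integrable M (\<lambda>\<omega>. f (Z \<omega>))"
    and J_meas: "J \<in> measurable M (count_space UNIV)"
    and J_unif: "\<forall>i. measure M {\<omega> \<in> space M. J \<omega> = i} = 1 / real CARD('d)"
    and J_indep: "\<forall>i. \<forall>A\<in>sets borel.
      measure M {\<omega> \<in> space M. J \<omega> = i \<and> Z \<omega> \<in> A}
      = measure M {\<omega> \<in> space M. J \<omega> = i} * measure M {\<omega> \<in> space M. Z \<omega> \<in> A}"
begin

abbreviation step :: "real^'d \<Rightarrow> 'd \<Rightarrow> real^'d" where
  "step \<equiv> coord_toward (\<alpha> / \<beta>) xstar"

lemma step_in_cbox: "x \<in> cbox a b \<Longrightarrow> step x i \<in> cbox a b"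
  by (rule in_F_coord_toward_in_cbox[OF fF pos _ xstar])

lemma integral_step_le:
  shows "integrable M (\<lambda>\<omega>. f (step (Z \<omega>) (J \<omega>)))"
    and "(\<integral>\<omega>. f (step (Z \<omega>) (J \<omega>)) \<partial>M)
      \<le> f xstar + (1 - \<alpha> / (real CARD('d) * \<beta>)) * ((\<integral>\<omega>. f (Z \<omega>) \<partial>M) - f xstar)"
proof -
  have box: "cbox a b \<noteq> {}" using xstar by blast
  let ?N = "restrict_space borel (cbox a b)"
  have Z_N: "Z \<in> measurable M ?N"
    using Z_meas Z_in by (intro measurable_restrict_space2) auto
  have f_step_N: "(\<lambda>x. f (step x i)) \<in> borel_measurable ?N" for i
    using step_in_cbox
    by (intro measurable_compose[OF measurable_restrict_space3[OF borel_measurable_coord_toward]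
          in_F_borel_measurable_cbox[OF fF box]]) auto
  obtain B where B: "\<And>x. x \<in> cbox a b \<Longrightarrow> f x \<le> B"
    using in_F_bdd_above_cbox[OF fF box] by (auto simp: bdd_above_def)
  have int_step: "integrable M (\<lambda>\<omega>. f (step (Z \<omega>) i))" for i
  proof (rule integrable_const_bound[where B="\<bar>f xstar\<bar> + \<bar>B\<bar>"])
    show "AE \<omega> in M. norm (f (step (Z \<omega>) i)) \<le> \<bar>f xstar\<bar> + \<bar>B\<bar>"
    proof (rule AE_I2)
      fix \<omega> assume "\<omega> \<in> space M"
      then have y: "step (Z \<omega>) i \<in> cbox a b" using Z_in step_in_cbox by blast
      show "norm (f (step (Z \<omega>) i)) \<le> \<bar>f xstar\<bar> + \<bar>B\<bar>"
        using B[OF y] bspec[OF minimal y] unfolding real_norm_def by arith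
    qed
    show "(\<lambda>\<omega>. f (step (Z \<omega>) i)) \<in> borel_measurable M"
      by (rule measurable_compose[OF Z_N f_step_N])
  qed
  have indep_N: "\<forall>i. \<forall>A\<in>sets ?N. measure M {\<omega> \<in> space M. J \<omega> = i \<and> Z \<omega> \<in> A}
      = measure M {\<omega> \<in> space M. J \<omega> = i} * measure M {\<omega> \<in> space M. Z \<omega> \<in> A}"
    using J_indep by (simp add: sets_restrict_space_iff)
  note uniform = integral_uniform_index[OF prob_space_axioms Z_N J_meas J_unif indep_N,
      of "\<lambda>x i. f (step x i)", OF allI allI, OF f_step_N int_step]
  show "integrable M (\<lambda>\<omega>. f (step (Z \<omega>) (J \<omega>)))" by (fact uniform(1))
  have "(\<integral>\<omega>. f (step (Z \<omega>) (J \<omega>)) \<partial>M) = (\<Sum>i\<in>UNIV. \<integral>\<omega>. f (step (Z \<omega>) i) \<partial>M) / real CARD('d)"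
    by (fact uniform(2))
  also have "\<dots> = (\<integral>\<omega>. (\<Sum>i\<in>UNIV. f (step (Z \<omega>) i)) / real CARD('d) \<partial>M)"
    using int_step by (simp add: Bochner_Integration.integral_sum)
  also have "\<dots> \<le> (\<integral>\<omega>. f xstar + (1 - \<alpha> / (real CARD('d) * \<beta>)) * (f (Z \<omega>) - f xstar) \<partial>M)"
  proof (rule integral_mono)
    show "integrable M (\<lambda>\<omega>. (\<Sum>i\<in>UNIV. f (step (Z \<omega>) i)) / real CARD('d))"
      using int_step by (intro integrable_divide Bochner_Integration.integrable_sum)
    show "integrable M (\<lambda>\<omega>. f xstar + (1 - \<alpha> / (real CARD('d) * \<beta>)) * (f (Z \<omega>) - f xstar))"
      using Z_int by simp
    show "(\<Sum>i\<in>UNIV. f (step (Z \<omega>) i)) / real CARD('d)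
        \<le> f xstar + (1 - \<alpha> / (real CARD('d) * \<beta>)) * (f (Z \<omega>) - f xstar)" if "\<omega> \<in> space M" for \<omega>
      using in_F_coordinate_steps_average_le[OF fF box pos _ xstar] Z_in that by blast
  qed
  also have "\<dots> = f xstar + (1 - \<alpha> / (real CARD('d) * \<beta>)) * ((\<integral>\<omega>. f (Z \<omega>) \<partial>M) - f xstar)"
    using Z_int by (simp add: prob_space)
  finally show "(\<integral>\<omega>. f (step (Z \<omega>) (J \<omega>)) \<partial>M)
      \<le> f xstar + (1 - \<alpha> / (real CARD('d) * \<beta>)) * ((\<integral>\<omega>. f (Z \<omega>) \<partial>M) - f xstar)" .
qed

lemma expected_coordinate_step_le:
  assumes Z'_int: "integrable M (\<lambda>\<omega>. f (Z' \<omega>))"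
    and acc: "AE \<omega> in M.
      real_cond_exp M (vimage_algebra (space M) (\<lambda>\<omega>. (Z \<omega>, J \<omega>)) (borel \<Otimes>\<^sub>M count_space UNIV))
        (\<lambda>\<omega>. f (Z' \<omega>)) \<omega>
      \<le> coord_min f (cbox a b) (Z \<omega>) (J \<omega>) + c"
  shows "(\<integral>\<omega>. f (Z' \<omega>) \<partial>M)
    \<le> f xstar + (1 - \<alpha> / (real CARD('d) * \<beta>)) * ((\<integral>\<omega>. f (Z \<omega>) \<partial>M) - f xstar) + c"
proof -
  let ?F = "vimage_algebra (space M) (\<lambda>\<omega>. (Z \<omega>, J \<omega>)) (borel \<Otimes>\<^sub>M count_space UNIV)"
  interpret finite_measure_subalgebra M ?F
    using Z_meas J_meas by (intro finite_measure_subalgebra_vimage_algebra) (auto intro: finite_measure_axioms)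
  have "bdd_below (f ` cbox a b)" using minimal by (auto intro: bdd_belowI2)
  then have coord_min_step: "coord_min f (cbox a b) (Z \<omega>) (J \<omega>) \<le> f (step (Z \<omega>) (J \<omega>))"
    if "\<omega> \<in> space M" for \<omega>
    using Z_in that step_in_cbox by (intro coord_min_le) (auto simp: coord_toward_nth)
  have "AE \<omega> in M. real_cond_exp M ?F (\<lambda>\<omega>. f (Z' \<omega>)) \<omega> \<le> f (step (Z \<omega>) (J \<omega>)) + c"
    using acc AE_space by eventually_elim (use coord_min_step in force)
  then have "(\<integral>\<omega>. f (Z' \<omega>) \<partial>M) \<le> (\<integral>\<omega>. f (step (Z \<omega>) (J \<omega>)) + c \<partial>M)"
    using integral_step_le(1) by (intro integral_le_of_real_cond_exp_le[OF Z'_int]) auto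
  also have "\<dots> = (\<integral>\<omega>. f (step (Z \<omega>) (J \<omega>)) \<partial>M) + c"
    using integral_step_le(1) by (simp add: prob_space)
  finally show ?thesis using integral_step_le(2) by linarith
qed

end

lemma geometric_rate_of_recursion:
  fixes e :: "nat \<Rightarrow> real"
  assumes "0 \<le> \<gamma>" "\<gamma> < 1" and rec: "\<And>m. e (Suc m) \<le> \<gamma>\<^sup>2 * e m + \<epsilon> * \<gamma> ^ Suc m"
  shows "e k \<le> max (e 0) (\<epsilon> / (1 - \<gamma>)) * \<gamma> ^ k"
proof (induction k)
  case 0
  show ?case by simp
next
  case (Suc m)
  define F where "F = max (e 0) (\<epsilon> / (1 - \<gamma>))"
  have "\<epsilon> = (1 - \<gamma>) * (\<epsilon> / (1 - \<gamma>))" using assms(2) by simp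
  also have "\<dots> \<le> (1 - \<gamma>) * F"
    using assms(2) by (intro mult_left_mono) (auto simp: F_def)
  finally have \<epsilon>: "\<epsilon> \<le> (1 - \<gamma>) * F" .
  have "e (Suc m) \<le> \<gamma>\<^sup>2 * (F * \<gamma> ^ m) + \<epsilon> * \<gamma> ^ Suc m"
    using rec[of m] mult_left_mono[OF Suc.IH, of "\<gamma>\<^sup>2"] by (simp add: F_def)
  also have "\<dots> = \<gamma> ^ Suc m * (\<gamma> * F + \<epsilon>)"
    by (simp add: power2_eq_square algebra_simps)
  also have "\<dots> \<le> \<gamma> ^ Suc m * F"
    using \<epsilon> assms(1) by (intro mult_left_mono) (auto simp: algebra_simps)
  finally show ?case by (simp add: F_def mult.commute)
qed

theorem lemma2:
  fixes M :: "'w measure"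
    and f :: "real^'d \<Rightarrow> real"
    and a b x0 xstar :: "real^'d"
    and \<alpha> \<beta> \<epsilon>0 \<gamma> :: real
    and X :: "nat \<Rightarrow> 'w \<Rightarrow> real^'d"
    and I :: "nat \<Rightarrow> 'w \<Rightarrow> 'd"
  assumes P: "prob_space M"
    and box: "cbox a b \<noteq> {}"
    and ab: "0 < \<alpha>" "0 < \<beta>"
    and fF: "in_F \<alpha> \<beta> (cbox a b) f"
    and opt: "xstar \<in> cbox a b" "\<forall>y\<in>cbox a b. f xstar \<le> f y"
    and eps0: "\<epsilon>0 > 0"
    and gam: "sqrt (1 - \<alpha> / (real CARD('d) * \<beta>)) \<le> \<gamma>" "\<gamma> < 1"
    and x0: "x0 \<in> cbox a b"
    and init: "\<forall>\<omega>\<in>space M. X 0 \<omega> = x0"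
    and Xmeas: "\<forall>k. X k \<in> borel_measurable M"
    and Xint: "\<forall>k. integrable M (\<lambda>\<omega>. f (X k \<omega>))"
    and Xin: "\<forall>k. \<forall>\<omega>\<in>space M. X k \<omega> \<in> cbox a b"
    and Imeas: "\<forall>k. I k \<in> measurable M (count_space UNIV)"
    and Iunif: "\<forall>k\<ge>1. \<forall>i. measure M {\<omega> \<in> space M. I k \<omega> = i} = 1 / real CARD('d)"
    and Iindep: "\<forall>k\<ge>1. \<forall>i. \<forall>A\<in>sets borel.
        measure M {\<omega> \<in> space M. I k \<omega> = i \<and> X (k - 1) \<omega> \<in> A}
        = measure M {\<omega> \<in> space M. I k \<omega> = i} * measure M {\<omega> \<in> space M. X (k - 1) \<omega> \<in> A}"
    and upd: "\<forall>k\<ge>1. \<forall>\<omega>\<in>space M. \<forall>j. j \<noteq> I k \<omega> \<longrightarrow> X k \<omega> $ j = X (k - 1) \<omega> $ j"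
    and acc: "\<forall>k\<ge>1. AE \<omega> in M.
        real_cond_exp M
          (vimage_algebra (space M) (\<lambda>\<omega>. (X (k - 1) \<omega>, I k \<omega>)) (borel \<Otimes>\<^sub>M count_space UNIV))
          (\<lambda>\<omega>. f (X k \<omega>)) \<omega>
        \<le> coord_min f (cbox a b) (X (k - 1) \<omega>) (I k \<omega>) + \<epsilon>0 * \<gamma> ^ k"
  shows "\<forall>k. (\<integral>\<omega>. f (X k \<omega>) \<partial>M) - f xstar
           \<le> max (f x0 - f xstar) (\<epsilon>0 / (1 - \<gamma>)) * \<gamma> ^ k"
proof -
  interpret prob_space M by (rule P)
  define e where "e k = (\<integral>\<omega>. f (X k \<omega>) \<partial>M) - f xstar" for k
  have e_nonneg: "0 \<le> e k" for k
    unfolding e_def using Xint Xin opt(2) by (auto intro!: integral_ge_const AE_I2)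
  have "(\<integral>\<omega>. f (X 0 \<omega>) \<partial>M) = (\<integral>\<omega>. f x0 \<partial>M)"
    using init by (intro Bochner_Integration.integral_cong) auto
  then have e0: "e 0 = f x0 - f xstar" by (simp add: e_def prob_space)
  have rate: "1 - \<alpha> / (real CARD('d) * \<beta>) \<le> \<gamma>\<^sup>2"
    using gam(1) by (rule sqrt_le_D)
  have rec: "e k \<le> \<gamma>\<^sup>2 * e (k - 1) + \<epsilon>0 * \<gamma> ^ k" if k: "1 \<le> k" for k
  proof -
    interpret random_coordinate_step M f a b xstar \<alpha> \<beta> "X (k - 1)" "I k"
      by unfold_locales (use k P ab fF opt Xmeas Xin Xint Imeas Iunif Iindep in blast)+
    have "e k \<le> (1 - \<alpha> / (real CARD('d) * \<beta>)) * e (k - 1) + \<epsilon>0 * \<gamma> ^ k"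
      using expected_coordinate_step_le[OF _ acc[rule_format, OF k]] Xint by (simp add: e_def)
    then show ?thesis using mult_right_mono[OF rate e_nonneg[of "k - 1"]] by linarith
  qed
  have "0 \<le> \<gamma>"
  proof (cases "\<alpha> \<le> \<beta>")
    case True
    have "1 * \<beta> \<le> real CARD('d) * \<beta>"
      using ab by (intro mult_right_mono) simp_all
    with True have "\<alpha> \<le> real CARD('d) * \<beta>" by simp
    with ab have "0 \<le> sqrt (1 - \<alpha> / (real CARD('d) * \<beta>))" by (simp add: pos_divide_le_eq)
    with gam(1) show ?thesis by linarith
  next
    case False
    \<comment> \<open>The box is then a single point, and only \<open>acc\<close> at step 1 rules out \<open>\<gamma> < 0\<close>.\<close>
    then have "e 0 = 0" using e0 in_F_eq_of_smoothness_lt[OF fF _ x0 opt(1)] by simp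
    then have "0 \<le> \<epsilon>0 * \<gamma>" using rec[of 1] e_nonneg[of 1] by simp
    with eps0 show ?thesis by (simp add: zero_le_mult_iff)
  qed
  then have "e k \<le> max (e 0) (\<epsilon>0 / (1 - \<gamma>)) * \<gamma> ^ k" for k
    using rec[of "Suc m" for m] gam(2) by (intro geometric_rate_of_recursion) auto
  then show ?thesis using e0 by (simp add: e_def)
qed

end
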